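(* Let $k\ge3$. Let $C$ be a cycle of length $2k$ and $P$ a path of length $2k-1$ such that $E(C)\cap E(P)=\emptyset$ and $V(C)\cap V(P)\neq\emptyset$. If $H:=C\cup P$ has girth at least $2k-2$, then $H$ can be decomposed into two paths whose lengths lie in $\{2k-1,2k\}$.
   Context: Graphs are finite and simple; length = number of edges; girth = length of a shortest cycle. A decomposition of a graph is a set of subgraphs whose edge sets partition its edge set. *)

theory Defs
  imports Main
begin

text \<open>Simple graphs are represented by their edge sets: an edge is a 2-element vertex set.
  A path is given by its sequence of distinct vertices; a cycle likewise (cyclically).\<close>

definition path_edges :: "'a list \<Rightarrow> 'a set set" where
  "path_edges vs = {{vs ! i, vs ! Suc i} | i. Suc i < length vs}"

definition is_path :: "'a list \<Rightarrow> nat \<Rightarrow> bool" where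
  "is_path vs n \<longleftrightarrow> distinct vs \<and> length vs = Suc n"

definition cycle_edges :: "'a list \<Rightarrow> 'a set set" where
  "cycle_edges vs = {{vs ! i, vs ! ((Suc i) mod length vs)} | i. i < length vs}"

definition is_cycle :: "'a list \<Rightarrow> nat \<Rightarrow> bool" where
  "is_cycle vs n \<longleftrightarrow> distinct vs \<and> length vs = n \<and> 3 \<le> n"

definition girth_at_least :: "'a set set \<Rightarrow> nat \<Rightarrow> bool" where
  "girth_at_least E g \<longleftrightarrow> (\<forall>vs n. is_cycle vs n \<and> cycle_edges vs \<subseteq> E \<longrightarrow> g \<le> n)"

end

theory Submission
  imports Defs
begin

text \<open>
  Write \<open>p\<^sub>0, \<dots>, p\<^sub>2\<^sub>k\<^sub>-\<^sub>1\<close> for the vertices of \<open>P\<close> and \<open>c\<^sub>0, \<dots>, c\<^sub>2\<^sub>k\<^sub>-\<^sub>1\<close> for those of \<open>C\<close>.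
  Let \<open>p\<^sub>a\<close> be the first vertex of \<open>P\<close> on \<open>C\<close>. After reversing \<open>P\<close> we may assume that
  \<open>j + a < 2k\<close> for every vertex \<open>p\<^sub>j\<close> on \<open>C\<close>, and after rotating \<open>C\<close> that \<open>p\<^sub>a = c\<^sub>0\<close>.
  For \<open>s = max a 1\<close> the walks \<open>p\<^sub>0 \<dots> p\<^sub>a\<^sub>-\<^sub>1 c\<^sub>0 \<dots> c\<^sub>2\<^sub>k\<^sub>-\<^sub>s\<close> and
  \<open>c\<^sub>2\<^sub>k\<^sub>-\<^sub>s \<dots> c\<^sub>2\<^sub>k\<^sub>-\<^sub>1 c\<^sub>0 = p\<^sub>a \<dots> p\<^sub>2\<^sub>k\<^sub>-\<^sub>1\<close> use every edge exactly once and have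
  lengths in \<open>{2k - 1, 2k}\<close>; they are paths unless \<open>P\<close> returns after \<open>p\<^sub>a\<close> to the arc
  \<open>c\<^sub>2\<^sub>k\<^sub>-\<^sub>s, \<dots>, c\<^sub>2\<^sub>k\<^sub>-\<^sub>1\<close>. The same holds with the orientation of \<open>C\<close> reversed.
  If \<open>P\<close> returns in both orientations, its segment up to the first return and the arc close a
  cycle of length at most \<open>2k - 1 - a\<close>, so the girth bound forces \<open>a \<le> 1\<close>: \<open>P\<close> meets both
  neighbours \<open>c\<^sub>1\<close> and \<open>c\<^sub>2\<^sub>k\<^sub>-\<^sub>1\<close> of \<open>c\<^sub>0\<close> near its far end. Then \<open>a = 0\<close>, and the cycle
  through \<open>c\<^sub>0\<close> and the segment of \<open>P\<close> between these two vertices forces \<open>k = 3\<close>, leaving a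
  single configuration on six vertices that is decomposed by hand.
\<close>

section \<open>Edge sets of paths and cycles\<close>

lemma path_edges_Nil [simp]: "path_edges [] = {}"
  by (simp add: path_edges_def)

lemma path_edges_singleton [simp]: "path_edges [x] = {}"
  by (simp add: path_edges_def)

lemma path_edges_Cons_Cons [simp]: "path_edges (x # y # zs) = insert {x, y} (path_edges (y # zs))"
proof -
  have "{f i | i. i < Suc n} = insert (f 0) {f (Suc i) | i. i < n}" for f :: "nat \<Rightarrow> 'b" and n
    by (auto simp: less_Suc_eq_0_disj)
  from this[of "\<lambda>i. {(x # y # zs) ! i, (x # y # zs) ! Suc i}" "length zs"] show ?thesis
    by (simp add: path_edges_def)
qed

lemma path_edges_Cons: "xs \<noteq> [] \<Longrightarrow> path_edges (x # xs) = insert {x, hd xs} (path_edges xs)"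
  by (cases xs) auto

lemma path_edges_append_Cons:
  "path_edges (xs @ y # ys) = path_edges (xs @ [y]) \<union> path_edges (y # ys)"
  by (induction xs) (auto simp: path_edges_Cons hd_append)

lemma path_edges_append:
  "ys \<noteq> [] \<Longrightarrow> path_edges (xs @ ys) = path_edges (xs @ [hd ys]) \<union> path_edges ys"
  by (metis list.collapse path_edges_append_Cons)

lemma path_edges_snoc: "xs \<noteq> [] \<Longrightarrow> path_edges (xs @ [y]) = insert {last xs, y} (path_edges xs)"
  by (induction xs rule: rev_induct) (auto simp: path_edges_append_Cons[of _ _ "[y]"])

lemma path_edges_rev [simp]: "path_edges (rev xs) = path_edges xs"
proof (induction xs)
  case (Cons x xs)
  then show ?case
    by (cases "xs = []") (simp_all add: path_edges_snoc path_edges_Cons last_rev insert_commute)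
qed simp

lemma path_edges_subset_append_left: "path_edges xs \<subseteq> path_edges (xs @ ys)"
  unfolding path_edges_def by (fastforce simp: nth_append)

lemma path_edges_subset_append_right: "path_edges ys \<subseteq> path_edges (xs @ ys)"
  by (metis path_edges_rev path_edges_subset_append_left rev_append)

lemma finite_path_edges [simp]: "finite (path_edges xs)"
proof -
  have "path_edges xs = (\<lambda>i. {xs ! i, xs ! Suc i}) ` {..<length xs - 1}"
    unfolding path_edges_def by auto
  then show ?thesis by simp
qed

lemma edge_subset_set: "e \<in> path_edges xs \<Longrightarrow> e \<subseteq> set xs"
  unfolding path_edges_def by auto

lemma card_path_edges: "distinct xs \<Longrightarrow> card (path_edges xs) = length xs - 1"
proof (induction xs)
  case (Cons x xs)
  then show ?case
    by (cases xs) (auto simp: card_insert_if dest: edge_subset_set)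
qed simp

lemma is_path_card_path_edges: "is_path xs l \<Longrightarrow> card (path_edges xs) = l"
  by (simp add: is_path_def card_path_edges)

lemma path_edges_take_drop:
  "i < length xs \<Longrightarrow> path_edges xs = path_edges (take (Suc i) xs) \<union> path_edges (drop i xs)"
  using path_edges_append_Cons[of "take i xs" "xs ! i" "drop (Suc i) xs"]
  by (simp add: take_Suc_conv_app_nth Cons_nth_drop_Suc id_take_nth_drop[symmetric])

lemma path_segment:
  assumes "distinct P" and "i < j" and "j < length P"
  defines "seg \<equiv> P ! i # drop (Suc i) (take j P) @ [P ! j]"
  shows "path_edges seg \<subseteq> path_edges P" and "distinct seg"
    and "set (drop (Suc i) (take j P)) \<subseteq> (!) P ` {i<..<j}"
    and "length (drop (Suc i) (take j P)) = j - Suc i"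
proof -
  have "drop i (take (Suc j) P) = seg"
    using assms(2,3) Cons_nth_drop_Suc[of i "take j P"] by (simp add: seg_def take_Suc_conv_app_nth)
  moreover have "take i P @ drop i (take (Suc j) P) = take (Suc j) P"
    using append_take_drop_id[of i "take (Suc j) P"] assms(2) by simp
  ultimately have P: "take i P @ seg @ drop (Suc j) P = P"
    by (metis append_assoc append_take_drop_id)
  have "path_edges seg \<subseteq> path_edges (take i P @ seg @ drop (Suc j) P)"
    by (meson path_edges_subset_append_left path_edges_subset_append_right subset_trans)
  then show "path_edges seg \<subseteq> path_edges P"
    by (simp only: P)
  show "distinct seg"
    using assms(1) distinct_append[of "take i P" "seg @ drop (Suc j) P"] by (simp only: P) simp
  show "set (drop (Suc i) (take j P)) \<subseteq> (!) P ` {i<..<j}"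
    using assms(3) by (auto simp: in_set_conv_nth image_iff intro!: bexI[of _ "Suc i + _"])
  show "length (drop (Suc i) (take j P)) = j - Suc i"
    using assms(3) by simp
qed

lemma cycle_edges_conv_path_edges: "xs \<noteq> [] \<Longrightarrow> cycle_edges xs = path_edges (xs @ [hd xs])"
  unfolding cycle_edges_def path_edges_def
  by (fastforce simp: nth_append hd_conv_nth less_Suc_eq mod_Suc)

lemma finite_cycle_edges [simp]: "finite (cycle_edges xs)"
  unfolding cycle_edges_def by simp

lemma cycle_edges_take_drop:
  "i < length xs \<Longrightarrow> cycle_edges xs = path_edges (take (Suc i) xs) \<union> path_edges (drop i xs @ [hd xs])"
  using path_edges_take_drop[of i "xs @ [hd xs]"] cycle_edges_conv_path_edges[of xs] by force

lemma cycle_edges_rotate1 [simp]: "cycle_edges (rotate1 xs) = cycle_edges xs"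
proof (cases xs)
  case (Cons x ys)
  show ?thesis
  proof (cases ys)
    case (Cons y zs)
    have "cycle_edges (rotate1 xs) = path_edges ((y # zs @ [x]) @ [y])"
      using \<open>xs = x # ys\<close> Cons by (simp add: cycle_edges_conv_path_edges)
    also have "\<dots> = path_edges (x # y # zs @ [x])"
      by (subst path_edges_snoc) (simp_all add: insert_commute)
    finally show ?thesis
      using \<open>xs = x # ys\<close> Cons by (simp add: cycle_edges_conv_path_edges)
  qed (simp add: \<open>xs = x # ys\<close>)
qed simp

lemma cycle_edges_rotate [simp]: "cycle_edges (rotate n xs) = cycle_edges xs"
  by (induction n) simp_all

lemma cycle_edges_rev [simp]: "cycle_edges (rev xs) = cycle_edges xs"
proof (cases xs)
  case (Cons x ys)
  have "cycle_edges (rev xs) = cycle_edges (rotate (length ys) (rev ys @ [x]))"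
    using Cons by simp
  also have "\<dots> = cycle_edges (x # rev ys)"
    by (metis length_rev rotate_append append_Cons append_Nil)
  also have "\<dots> = path_edges (rev (x # ys @ [x]))"
    by (simp add: cycle_edges_conv_path_edges del: path_edges_rev)
  also have "\<dots> = cycle_edges xs"
    by (subst path_edges_rev) (simp add: Cons cycle_edges_conv_path_edges)
  finally show ?thesis .
qed simp

lemma card_cycle_edges:
  assumes "distinct xs" and "3 \<le> length xs"
  shows "card (cycle_edges xs) = length xs"
proof -
  obtain x y zs where xs: "xs = x # y # zs" and "zs \<noteq> []"
    using assms(2) by (auto simp: numeral_3_eq_3 Suc_le_length_iff)
  have "cycle_edges xs = insert {last xs, x} (path_edges xs)"
    using path_edges_snoc[of xs x] by (simp add: xs cycle_edges_conv_path_edges)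
  moreover have "{last xs, x} \<notin> path_edges xs"
    using assms(1) \<open>zs \<noteq> []\<close> last_in_set[of zs]
    by (auto simp: xs doubleton_eq_iff dest: edge_subset_set)
  ultimately have "card (cycle_edges xs) = Suc (card (path_edges xs))"
    by simp
  then show ?thesis
    using card_path_edges[OF assms(1)] assms(2) by simp
qed

lemma nth_0_notin_set_drop: "distinct xs \<Longrightarrow> 0 < r \<Longrightarrow> xs ! 0 \<notin> set (drop r xs)"
  by (cases xs; cases r) (auto dest: in_set_dropD)

lemma nth_rev_rotate1:
  assumes "0 < t" and "t < length xs"
  shows "rev (rotate1 xs) ! t = xs ! (length xs - t)"
  using assms by (cases xs) (auto simp: rev_nth nth_append nth_Cons')

lemma rev_rotate1_nth_0: "xs \<noteq> [] \<Longrightarrow> rev (rotate1 xs) ! 0 = xs ! 0"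
  by (cases xs) (auto simp: nth_append)

lemma reversed_cycle:
  assumes "is_cycle C n"
  shows "is_cycle (rev (rotate1 C)) n" and "set (rev (rotate1 C)) = set C"
    and "cycle_edges (rev (rotate1 C)) = cycle_edges C" and "rev (rotate1 C) ! 0 = C ! 0"
    and "\<And>t. 0 < t \<Longrightarrow> t < n \<Longrightarrow> rev (rotate1 C) ! t = C ! (n - t)"
proof -
  have "C \<noteq> []"
    using assms by (auto simp: is_cycle_def)
  then show "rev (rotate1 C) ! 0 = C ! 0"
    by (rule rev_rotate1_nth_0)
qed (use assms in \<open>auto simp: is_cycle_def nth_rev_rotate1\<close>)

section \<open>Cutting the cycle and the path at a common vertex\<close>

definition two_path_decomposition :: "'a set set \<Rightarrow> nat set \<Rightarrow> bool" where
  "two_path_decomposition E L \<longleftrightarrow> (\<exists>Q1 Q2 l1 l2. is_path Q1 l1 \<and> is_path Q2 l2 \<and> l1 \<in> L \<and> l2 \<in> L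
     \<and> path_edges Q1 \<inter> path_edges Q2 = {} \<and> path_edges Q1 \<union> path_edges Q2 = E)"

lemma two_path_decompositionI:
  "is_path Q1 l1 \<Longrightarrow> is_path Q2 l2 \<Longrightarrow> l1 \<in> L \<Longrightarrow> l2 \<in> L \<Longrightarrow> path_edges Q1 \<inter> path_edges Q2 = {}
   \<Longrightarrow> path_edges Q1 \<union> path_edges Q2 = E \<Longrightarrow> two_path_decomposition E L"
  unfolding two_path_decomposition_def by blast

lemma path_cycle_decomposition:
  assumes D: "distinct D" "3 \<le> length D" and P: "distinct P"
    and disj: "cycle_edges D \<inter> path_edges P = {}"
    and a: "a < length P" "P ! a = D ! 0" and m: "0 < m" "m < length D"
    and Q1_distinct: "set (take a P) \<inter> set D = {}"
    and Q2_distinct: "set (drop m D) \<inter> set (drop a P) = {}"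
  defines "Q1 \<equiv> take a P @ take (Suc m) D" and "Q2 \<equiv> drop m D @ drop a P"
  shows "is_path Q1 (a + m)" and "is_path Q2 (length D - m + (length P - 1 - a))"
    and "path_edges Q1 \<inter> path_edges Q2 = {}"
    and "path_edges Q1 \<union> path_edges Q2 = cycle_edges D \<union> path_edges P"
proof -
  show Q1: "is_path Q1 (a + m)"
    using D P a m Q1_distinct by (auto simp: is_path_def Q1_def dest: in_set_takeD)
  show Q2: "is_path Q2 (length D - m + (length P - 1 - a))"
    using D P a m Q2_distinct by (auto simp: is_path_def Q2_def)
  have "D \<noteq> []"
    using D(2) by auto
  then have hd_D: "hd D = D ! 0"
    by (rule hd_conv_nth)
  have hd_drop_P: "hd (drop a P) = P ! a"
    using a(1) by (simp add: hd_drop_conv_nth)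
  have "take a P @ [hd (take (Suc m) D)] = take (Suc a) P"
    using a hd_D by (simp add: take_Suc_conv_app_nth)
  then have "path_edges Q1 = path_edges (take (Suc a) P) \<union> path_edges (take (Suc m) D)"
    using path_edges_append[of "take (Suc m) D" "take a P"] \<open>D \<noteq> []\<close> by (simp add: Q1_def)
  moreover have "path_edges Q2 = path_edges (drop m D @ [hd D]) \<union> path_edges (drop a P)"
    using a m path_edges_append[of "drop a P" "drop m D"] by (simp add: Q2_def hd_D hd_drop_P)
  ultimately show union: "path_edges Q1 \<union> path_edges Q2 = cycle_edges D \<union> path_edges P"
    using path_edges_take_drop[OF a(1)] cycle_edges_take_drop[OF m(2)] by blast
  \<comment> \<open>Together the two paths have as many edges as \<open>D\<close> and \<open>P\<close>, so covering all of them
    leaves no room for a common edge.\<close>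
  have "card (cycle_edges D \<union> path_edges P) = length D + (length P - 1)"
    using D P disj by (simp add: card_Un_disjoint card_cycle_edges card_path_edges)
  then have "card (path_edges Q1 \<union> path_edges Q2) = card (path_edges Q1) + card (path_edges Q2)"
    using union is_path_card_path_edges[OF Q1] is_path_card_path_edges[OF Q2] a m by simp
  then show "path_edges Q1 \<inter> path_edges Q2 = {}"
    using card_Un_Int[of "path_edges Q1" "path_edges Q2"] by simp
qed

lemma decomposition_if_unblocked:
  assumes D: "distinct D" "3 \<le> length D" and P: "distinct P" "length P = length D"
    and disj: "cycle_edges D \<inter> path_edges P = {}"
    and a: "a < length P" "P ! a = D ! 0" and before: "set (take a P) \<inter> set D = {}"
    and unblocked: "set (drop (length D - max a 1) D) \<inter> set (drop a P) = {}"
  shows "two_path_decomposition (cycle_edges D \<union> path_edges P) {length D - 1, length D}"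
proof -
  let ?m = "length D - max a 1"
  have m: "0 < ?m" "?m < length D"
    using a P(2) D(2) by auto
  note split = path_cycle_decomposition[OF D P(1) disj a m before unblocked]
  show ?thesis
    by (rule two_path_decompositionI[OF split(1,2) _ _ split(3,4)]) (use a P(2) in auto)
qed

section \<open>Short cycles forced by the girth bound\<close>

lemma girth_at_leastD:
  "girth_at_least E g \<Longrightarrow> distinct vs \<Longrightarrow> 3 \<le> length vs \<Longrightarrow> cycle_edges vs \<subseteq> E \<Longrightarrow> g \<le> length vs"
  by (auto simp: girth_at_least_def is_cycle_def)

lemma girth_le_two_paths:
  assumes g: "girth_at_least E g"
    and E: "path_edges (u # xs @ [v]) \<subseteq> E" "path_edges (u # ys @ [v]) \<subseteq> E"
    and distinct: "distinct (u # xs @ [v])" "distinct (u # ys @ [v])" "set xs \<inter> set ys = {}"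
    and nontrivial: "xs \<noteq> [] \<or> ys \<noteq> []"
  shows "g \<le> length xs + length ys + 2"
proof -
  let ?X = "u # xs @ v # rev ys"
  have "path_edges (v # rev ys @ [u]) = path_edges (u # ys @ [v])"
    using path_edges_rev[of "u # ys @ [v]"] by simp
  then have "cycle_edges ?X = path_edges (u # xs @ [v]) \<union> path_edges (u # ys @ [v])"
    using path_edges_append_Cons[of "u # xs" v "rev ys @ [u]"]
    by (simp add: cycle_edges_conv_path_edges)
  then have "cycle_edges ?X \<subseteq> E"
    using E by simp
  moreover have "distinct ?X" and "3 \<le> length ?X"
    using distinct nontrivial by (auto simp: Suc_le_eq)
  ultimately show ?thesis
    using girth_at_leastD[OF g] by fastforce
qed

lemma no_triangle:
  assumes "girth_at_least E 4" and "distinct [x, y, z]" and "{x, y} \<in> E" "{y, z} \<in> E" "{z, x} \<in> E"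
  shows False
  using girth_at_leastD[OF assms(1,2)] assms(3-) by (simp add: cycle_edges_conv_path_edges)

lemma girth_le_common_neighbour:
  assumes g: "girth_at_least E g" and P: "distinct P" "path_edges P \<subseteq> E"
    and ij: "i < j" "j < length P"
    and z: "z \<notin> (!) P ` {i..j}" and E: "{P ! i, z} \<in> E" "{z, P ! j} \<in> E"
  shows "g \<le> j - i + 2"
proof -
  have "g \<le> length (drop (Suc i) (take j P)) + length [z] + 2"
  proof (rule girth_le_two_paths[OF g])
    show "path_edges (P ! i # drop (Suc i) (take j P) @ [P ! j]) \<subseteq> E"
      using path_segment(1)[OF P(1) ij] P(2) by blast
    show "distinct (P ! i # drop (Suc i) (take j P) @ [P ! j])"
      by (rule path_segment(2)[OF P(1) ij])
    show "path_edges (P ! i # [z] @ [P ! j]) \<subseteq> E" and "distinct (P ! i # [z] @ [P ! j])"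
      using E z ij by (auto simp: nth_eq_iff_index_eq P(1))
    show "set (drop (Suc i) (take j P)) \<inter> set [z] = {}"
      using z path_segment(3)[OF P(1) ij] by auto
  qed simp
  then show ?thesis
    using path_segment(4)[OF P(1) ij] ij by simp
qed

lemma two_neighbours_of_start:
  assumes g: "girth_at_least E (n - 2)" and P: "distinct P" "path_edges P \<subseteq> E" "length P = n"
    and "6 \<le> n" and ij: "i \<noteq> j" "i < n" "j < n" "n \<le> i + 3" "n \<le> j + 3"
    and E: "{P ! 0, P ! i} \<in> E" "{P ! 0, P ! j} \<in> E"
  shows "n = 6 \<and> {i, j} = {3, 5}"
proof -
  have bound: "n - 2 \<le> j' - i' + 2"
    if "0 < i'" "i' < j'" "j' < n" "{P ! 0, P ! i'} \<in> E" "{P ! 0, P ! j'} \<in> E" for i' j'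
  proof (rule girth_le_common_neighbour[OF g P(1,2) that(2)])
    show "j' < length P"
      using that P(3) by simp
    show "P ! 0 \<notin> (!) P ` {i'..j'}"
    proof
      assume "P ! 0 \<in> (!) P ` {i'..j'}"
      then obtain x where x: "i' \<le> x" "x \<le> j'" "P ! 0 = P ! x"
        by auto
      then have "0 = x"
        using nth_eq_iff_index_eq[OF P(1), of 0 x] that(3) P(3) by simp
      then show False
        using x(1) that(1) by simp
    qed
    show "{P ! i', P ! 0} \<in> E" "{P ! 0, P ! j'} \<in> E"
      using that by (simp_all add: insert_commute)
  qed
  have "n - 2 \<le> j - i + 2 \<or> n - 2 \<le> i - j + 2"
  proof (cases "i < j")
    case True
    then show ?thesis
      using bound[of i j] ij E \<open>6 \<le> n\<close> by simp
  next
    case False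
    then show ?thesis
      using bound[of j i] ij E \<open>6 \<le> n\<close> by simp
  qed
  then have "n = 6" and "i = 3 \<and> j = 5 \<or> i = 5 \<and> j = 3"
    using ij \<open>6 \<le> n\<close> by linarith+
  then show ?thesis
    by auto
qed

lemma girth_le_return_to_cycle:
  assumes g: "girth_at_least (cycle_edges D \<union> path_edges P) g"
    and D: "distinct D" and P: "distinct P" and disj: "cycle_edges D \<inter> path_edges P = {}"
    and aj: "a < j" "j < length P" and r: "0 < r" "r < length D"
    and ends: "P ! a = D ! 0" "P ! j = D ! r"
    and first: "\<And>l. a < l \<Longrightarrow> l < j \<Longrightarrow> P ! l \<notin> set (drop r D)"
  shows "g \<le> j - a + (length D - r)"
proof -
  let ?xs = "drop (Suc a) (take j P)" and ?ys = "rev (drop (Suc r) D)"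
  have "D \<noteq> []"
    using r by auto
  have arc: "P ! a # ?ys @ [P ! j] = rev (drop r D @ [hd D])"
    using ends \<open>D \<noteq> []\<close> Cons_nth_drop_Suc[OF r(2), symmetric] by (simp add: hd_conv_nth)
  have "g \<le> length ?xs + length ?ys + 2"
  proof (rule girth_le_two_paths[OF g])
    show "path_edges (P ! a # ?xs @ [P ! j]) \<subseteq> cycle_edges D \<union> path_edges P"
      using path_segment(1)[OF P aj] by blast
    show "path_edges (P ! a # ?ys @ [P ! j]) \<subseteq> cycle_edges D \<union> path_edges P"
      unfolding arc path_edges_rev using cycle_edges_take_drop[OF r(2)] by auto
    show "distinct (P ! a # ?xs @ [P ! j])"
      by (rule path_segment(2)[OF P aj])
    show "distinct (P ! a # ?ys @ [P ! j])"
      unfolding arc using D nth_0_notin_set_drop[OF D r(1)] \<open>D \<noteq> []\<close> by (simp add: hd_conv_nth)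
    show "set ?xs \<inter> set ?ys = {}"
      using path_segment(3)[OF P aj] first set_drop_subset_set_drop[of r "Suc r" D] by fastforce
    show "?xs \<noteq> [] \<or> ?ys \<noteq> []"
    proof (rule ccontr)
      assume "\<not> (?xs \<noteq> [] \<or> ?ys \<noteq> [])"
      then have "j = Suc a" and "r = length D - 1"
        using aj r by auto
      have "{D ! r, D ! (Suc r mod length D)} \<in> cycle_edges D"
        using r(2) unfolding cycle_edges_def by auto
      moreover have "Suc r = length D"
        using \<open>r = length D - 1\<close> r by simp
      ultimately have "{P ! a, P ! Suc a} \<in> cycle_edges D"
        using ends \<open>j = Suc a\<close> by (simp add: insert_commute)
      moreover have "{P ! a, P ! Suc a} \<in> path_edges P"
        using aj \<open>j = Suc a\<close> unfolding path_edges_def by auto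
      ultimately show False
        using disj by blast
    qed
  qed
  then show ?thesis
    using path_segment(4)[OF P aj] aj r by simp
qed

lemma blocked_arc_return:
  assumes g: "girth_at_least (cycle_edges D \<union> path_edges P) (n - 2)"
    and D: "distinct D" "length D = n" and P: "distinct P" "length P = n" and "2 \<le> n"
    and disj: "cycle_edges D \<inter> path_edges P = {}"
    and a: "a < n" "P ! a = D ! 0"
    and late: "\<And>j. j < n \<Longrightarrow> P ! j \<in> set D \<Longrightarrow> j + a < n"
    and blocked: "set (drop (n - max a 1) D) \<inter> set (drop a P) \<noteq> {}"
  shows "a \<le> 1 \<and> (\<exists>j. a < j \<and> j + a < n \<and> n \<le> j - a + 3 \<and> P ! j = D ! (n - 1))"
proof -
  define m where "m = n - max a 1"
  have m: "0 < m" "m < n"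
    using a \<open>2 \<le> n\<close> by (auto simp: m_def)
  define returns where "returns j \<longleftrightarrow> a < j \<and> j < n \<and> P ! j \<in> set (drop m D)" for j
  have "\<exists>j. returns j"
  proof -
    obtain x where x: "x \<in> set (drop m D)" and "x \<in> set (drop a P)"
      using blocked by (auto simp: m_def)
    then obtain i where "i < length (drop a P)" and "drop a P ! i = x"
      by (metis in_set_conv_nth)
    then have i: "a + i < n" "P ! (a + i) \<in> set (drop m D)"
      using x P(2) by auto
    moreover have "i \<noteq> 0"
      using i(2) a(2) nth_0_notin_set_drop[OF D(1) m(1)] by (metis add_0_right)
    ultimately show ?thesis
      unfolding returns_def by (intro exI[of _ "a + i"]) simp
  qed
  then obtain j where j: "returns j" and first: "\<And>l. l < j \<Longrightarrow> \<not> returns l"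
    by (metis exists_least_iff)
  obtain i where "i < length (drop m D)" and "drop m D ! i = P ! j"
    using j by (metis returns_def in_set_conv_nth)
  then obtain r where r: "m \<le> r" "r < n" "P ! j = D ! r"
    using D(2) by (intro that[of "m + i"]) auto
  have "n - 2 \<le> j - a + (n - r)"
  proof (rule girth_le_return_to_cycle[OF g D(1) P(1) disj, of a j r, unfolded D(2)])
    show "P ! l \<notin> set (drop r D)" if "a < l" "l < j" for l
      using first[of l] that j set_drop_subset_set_drop[of m r D] r(1)
      by (auto simp: returns_def)
  qed (use j r m a P(2) in \<open>auto simp: returns_def\<close>)
  moreover have "j + a < n"
    using late[of j] j r D(2) by (auto simp: returns_def)
  moreover have "n - r \<le> max a 1"
    using r(1) m_def by simp
  moreover have "a < j"
    using j by (simp add: returns_def)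
  ultimately have "a \<le> 1" and "r = n - 1"
    using r(2) by (auto simp: max_def split: if_splits)
  then show ?thesis
    using j r \<open>n - 2 \<le> j - a + (n - r)\<close> \<open>j + a < n\<close> by (auto simp: returns_def)
qed

lemma list_of_length_6: "length xs = 6 \<Longrightarrow> xs = [xs ! 0, xs ! 1, xs ! 2, xs ! 3, xs ! 4, xs ! 5]"
  by (simp add: list_eq_iff_nth_eq less_Suc_eq numeral_eq_Suc nth_Cons')

lemma hexagon_decomposition:
  assumes C: "is_cycle C 6" and P: "is_path P 5"
    and ends: "P ! 0 = C ! 0" "P ! 3 = C ! 5" "P ! 5 = C ! 1"
    and disj: "cycle_edges C \<inter> path_edges P = {}"
    and g: "girth_at_least (cycle_edges C \<union> path_edges P) 4"
  shows "two_path_decomposition (cycle_edges C \<union> path_edges P) {5, 6}"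
proof -
  obtain c0 c1 c2 c3 c4 c5 p1 p2 p4
    where C_eq: "C = [c0, c1, c2, c3, c4, c5]" and P_eq: "P = [c0, p1, p2, c5, p4, c1]"
    using C P ends list_of_length_6[of C] list_of_length_6[of P]
    by (auto simp: is_cycle_def is_path_def)
  have dC: "distinct [c0, c1, c2, c3, c4, c5]" and dP: "distinct [c0, p1, p2, c5, p4, c1]"
    using C P by (simp_all add: is_cycle_def is_path_def C_eq P_eq)
  have CE: "cycle_edges C = {{c0, c1}, {c1, c2}, {c2, c3}, {c3, c4}, {c4, c5}, {c5, c0}}"
    by (simp add: C_eq cycle_edges_conv_path_edges)
  have PE: "path_edges P = {{c0, p1}, {p1, p2}, {p2, c5}, {c5, p4}, {p4, c1}}"
    by (simp add: P_eq)
  have edge_disj: "e \<in> cycle_edges C \<Longrightarrow> e \<notin> path_edges P" for e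
    using disj by blast
  have "p4 \<noteq> c2"
    using edge_disj[of "{c1, c2}"] unfolding CE PE by (auto simp: insert_commute)
  moreover have "p4 \<noteq> c4" "p2 \<noteq> c4"
    using edge_disj[of "{c4, c5}"] unfolding CE PE by (auto simp: insert_commute)
  moreover have "{c3, c4} \<in> cycle_edges C" "{c4, c5} \<in> cycle_edges C"
    by (simp_all add: CE)
  then have "p4 \<noteq> c3" "p2 \<noteq> c3"
    using no_triangle[OF g, of c3 c4 c5] dC by (auto simp: PE insert_commute)
  moreover have "p1 \<noteq> c4"
  proof
    assume "p1 = c4"
    then show False
      using no_triangle[OF g, of c4 p2 c5] dC dP \<open>p2 \<noteq> c4\<close> \<open>{c4, c5} \<in> cycle_edges C\<close>
      by (simp add: PE insert_commute)
  qed
  ultimately have distinct_facts: "p4 \<noteq> c2" "p4 \<noteq> c3" "p4 \<noteq> c4" "p2 \<noteq> c3" "p2 \<noteq> c4" "p1 \<noteq> c4"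
    by simp_all
  show ?thesis
  proof (cases "p1 = c3")
    case True
    then have "p2 \<noteq> c2"
      using edge_disj[of "{c2, c3}"] unfolding CE PE by (auto simp: insert_commute)
    show ?thesis
    proof (rule two_path_decompositionI[of "[c0, p1, p2, c5, p4, c1, c2]" 6 "[c2, c3, c4, c5, c0, c1]" 5])
      show "is_path [c0, p1, p2, c5, p4, c1, c2] 6" and "is_path [c2, c3, c4, c5, c0, c1] 5"
        using dC dP distinct_facts True \<open>p2 \<noteq> c2\<close> by (auto simp: is_path_def)
      show "path_edges [c0, p1, p2, c5, p4, c1, c2] \<inter> path_edges [c2, c3, c4, c5, c0, c1] = {}"
        using dC dP distinct_facts True \<open>p2 \<noteq> c2\<close> by (auto simp: doubleton_eq_iff)
      show "path_edges [c0, p1, p2, c5, p4, c1, c2] \<union> path_edges [c2, c3, c4, c5, c0, c1] =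
          cycle_edges C \<union> path_edges P"
        by (simp add: CE PE True insert_commute)
    qed simp_all
  next
    case False
    show ?thesis
    proof (rule two_path_decompositionI[of "[c3, c2, c1, p4, c5, c0]" 5 "[c3, c4, c5, p2, p1, c0, c1]" 6])
      show "is_path [c3, c2, c1, p4, c5, c0] 5" and "is_path [c3, c4, c5, p2, p1, c0, c1] 6"
        using dC dP distinct_facts False by (auto simp: is_path_def)
      show "path_edges [c3, c2, c1, p4, c5, c0] \<inter> path_edges [c3, c4, c5, p2, p1, c0, c1] = {}"
        using dC dP distinct_facts False by (auto simp: doubleton_eq_iff)
      show "path_edges [c3, c2, c1, p4, c5, c0] \<union> path_edges [c3, c4, c5, p2, p1, c0, c1] =
          cycle_edges C \<union> path_edges P"
        by (simp add: CE PE insert_commute)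
    qed simp_all
  qed
qed

lemma decomposition_if_returns_to_both_neighbours:
  fixes k :: nat
  assumes k: "3 \<le> k" and C: "is_cycle C (2 * k)" and P: "is_path P (2 * k - 1)"
    and disj: "cycle_edges C \<inter> path_edges P = {}"
    and g: "girth_at_least (cycle_edges C \<union> path_edges P) (2 * k - 2)"
    and start: "P ! 0 = C ! 0"
    and j1: "2 * k \<le> j1 + 3" "j1 < 2 * k" "P ! j1 = C ! (2 * k - 1)"
    and j2: "2 * k \<le> j2 + 3" "j2 < 2 * k" "P ! j2 = C ! 1"
  shows "two_path_decomposition (cycle_edges C \<union> path_edges P) {2 * k - 1, 2 * k}"
proof -
  define n where "n = 2 * k"
  define C' where "C' = rev (rotate1 C)"
  have C_n: "distinct C" "length C = n" and P_n: "distinct P" "length P = n"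
    using C P k by (auto simp: is_cycle_def is_path_def n_def)
  have "j1 \<noteq> j2"
    using j1(3) j2(3) C_n k by (auto simp: nth_eq_iff_index_eq n_def)
  have "{C ! (n - 1), C ! (Suc (n - 1) mod n)} \<in> cycle_edges C" "{C ! 0, C ! (Suc 0 mod n)} \<in> cycle_edges C"
    using C_n k unfolding cycle_edges_def n_def by force+
  then have "{P ! 0, P ! j1} \<in> cycle_edges C" "{P ! 0, P ! j2} \<in> cycle_edges C"
    using j1(3) j2(3) start k by (simp_all add: n_def insert_commute)
  then have "n = 6 \<and> {j1, j2} = {3, 5}"
    using two_neighbours_of_start[OF g[folded n_def] P_n(1) _ P_n(2)] \<open>j1 \<noteq> j2\<close> j1 j2 k
    by (auto simp: n_def)
  then have "k = 3" and "j1 = 3 \<and> j2 = 5 \<or> j1 = 5 \<and> j2 = 3"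
    by (auto simp: n_def doubleton_eq_iff)
  have hexagon: "is_cycle C 6" "is_cycle C' 6" "is_path P 5"
    "girth_at_least (cycle_edges C \<union> path_edges P) 4"
    using C reversed_cycle(1)[OF C] P g \<open>k = 3\<close> by (simp_all add: C'_def)
  from \<open>j1 = 3 \<and> j2 = 5 \<or> j1 = 5 \<and> j2 = 3\<close> show ?thesis
  proof
    assume "j1 = 3 \<and> j2 = 5"
    then show ?thesis
      using hexagon_decomposition[OF hexagon(1,3) start _ _ disj hexagon(4)] j1(3) j2(3) \<open>k = 3\<close>
      by simp
  next
    assume "j1 = 5 \<and> j2 = 3"
    then have "P ! 0 = C' ! 0" "P ! 3 = C' ! 5" "P ! 5 = C' ! 1"
      using start j1(3) j2(3) reversed_cycle(4,5)[OF C] \<open>k = 3\<close> by (simp_all add: C'_def)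
    moreover have "cycle_edges C' = cycle_edges C"
      using reversed_cycle(3)[OF C] by (simp add: C'_def)
    ultimately show ?thesis
      using hexagon_decomposition[OF hexagon(2,3)] hexagon(4) disj \<open>k = 3\<close> by simp
  qed
qed

lemma decomposition_or_return:
  fixes k a :: nat
  assumes k: "3 \<le> k" and D: "is_cycle D (2 * k)" and P: "is_path P (2 * k - 1)"
    and disj: "cycle_edges D \<inter> path_edges P = {}"
    and g: "girth_at_least (cycle_edges D \<union> path_edges P) (2 * k - 2)"
    and a: "a < 2 * k" "P ! a = D ! 0" and before: "set (take a P) \<inter> set D = {}"
    and late: "\<And>j. j < 2 * k \<Longrightarrow> P ! j \<in> set D \<Longrightarrow> j + a < 2 * k"
  shows "two_path_decomposition (cycle_edges D \<union> path_edges P) {2 * k - 1, 2 * k} \<or>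
    a \<le> 1 \<and> (\<exists>j. a < j \<and> j + a < 2 * k \<and> 2 * k \<le> j - a + 3 \<and> P ! j = D ! (2 * k - 1))"
proof (cases "set (drop (2 * k - max a 1) D) \<inter> set (drop a P) = {}")
  case True
  have "two_path_decomposition (cycle_edges D \<union> path_edges P) {length D - 1, length D}"
    using D P k disj a before True
    by (intro decomposition_if_unblocked) (simp_all add: is_cycle_def is_path_def)
  then show ?thesis
    using D by (simp add: is_cycle_def)
next
  case False
  have "a \<le> 1 \<and> (\<exists>j. a < j \<and> j + a < 2 * k \<and> 2 * k \<le> j - a + 3 \<and> P ! j = D ! (2 * k - 1))"
    using D P k disj a late False g
    by (intro blocked_arc_return) (simp_all add: is_cycle_def is_path_def)
  then show ?thesis ..
qed

lemma decomposition_from_first_contact: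
  fixes k a :: nat
  assumes k: "3 \<le> k" and C: "is_cycle C (2 * k)" and P: "is_path P (2 * k - 1)"
    and disj: "cycle_edges C \<inter> path_edges P = {}"
    and g: "girth_at_least (cycle_edges C \<union> path_edges P) (2 * k - 2)"
    and a: "a < 2 * k" "P ! a = C ! 0" and before: "set (take a P) \<inter> set C = {}"
    and late: "\<And>j. j < 2 * k \<Longrightarrow> P ! j \<in> set C \<Longrightarrow> j + a < 2 * k"
  shows "two_path_decomposition (cycle_edges C \<union> path_edges P) {2 * k - 1, 2 * k}"
proof -
  define C' where "C' = rev (rotate1 C)"
  have C': "is_cycle C' (2 * k)" "set C' = set C" "cycle_edges C' = cycle_edges C" "C' ! 0 = C ! 0"
    using reversed_cycle[OF C] by (simp_all add: C'_def)
  note forward = decomposition_or_return[OF k C P disj g a before late]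
  note backward = decomposition_or_return[OF k C'(1) P, unfolded C'(2-4), OF disj g a before late]
  show ?thesis
  proof (cases "two_path_decomposition (cycle_edges C \<union> path_edges P) {2 * k - 1, 2 * k}")
    case False
    obtain j1 where "a \<le> 1"
      and j1: "a < j1" "j1 + a < 2 * k" "2 * k \<le> j1 - a + 3" "P ! j1 = C ! (2 * k - 1)"
      using forward False by blast
    have "C' ! (2 * k - 1) = C ! 1"
      using reversed_cycle(5)[OF C, of "2 * k - 1"] k by (simp add: C'_def)
    then obtain j2 where j2: "a < j2" "j2 + a < 2 * k" "2 * k \<le> j2 - a + 3" "P ! j2 = C ! 1"
      using backward False by auto
    have "j1 \<noteq> j2"
      using j1(4) j2(4) C k by (auto simp: is_cycle_def nth_eq_iff_index_eq)
    then have "a = 0"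
      using \<open>a \<le> 1\<close> j1 j2 by auto
    then show ?thesis
      using decomposition_if_returns_to_both_neighbours[OF k C P disj g] a(2) j1 j2 by simp
  qed
qed

lemma decomposition_from_extremal_contact:
  fixes k a :: nat
  assumes k: "3 \<le> k" and C: "is_cycle C (2 * k)" and P: "is_path P (2 * k - 1)"
    and disj: "cycle_edges C \<inter> path_edges P = {}"
    and g: "girth_at_least (cycle_edges C \<union> path_edges P) (2 * k - 2)"
    and a: "a < 2 * k" "P ! a \<in> set C"
    and extremal: "\<And>j. j < 2 * k \<Longrightarrow> P ! j \<in> set C \<Longrightarrow> a \<le> j \<and> j + a < 2 * k"
  shows "two_path_decomposition (cycle_edges C \<union> path_edges P) {2 * k - 1, 2 * k}"
proof -
  have lengths: "length C = 2 * k" "length P = 2 * k"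
    using C P k by (auto simp: is_cycle_def is_path_def)
  obtain r where r: "r < 2 * k" "C ! r = P ! a"
    using a(2) lengths(1) by (metis in_set_conv_nth)
  let ?C = "rotate r C"
  have "two_path_decomposition (cycle_edges ?C \<union> path_edges P) {2 * k - 1, 2 * k}"
  proof (rule decomposition_from_first_contact[OF k _ P _ _ a(1)])
    show "is_cycle ?C (2 * k)"
      using C by (simp add: is_cycle_def)
    show "P ! a = ?C ! 0"
      using r lengths(1) by (simp add: nth_rotate)
    show "set (take a P) \<inter> set ?C = {}"
    proof (rule equals0I)
      fix x
      assume x: "x \<in> set (take a P) \<inter> set ?C"
      then obtain i where "i < a" and "x = P ! i"
        using a(1) lengths(2) by (auto simp: in_set_conv_nth)
      then show False
        using extremal[of i] x a(1) by simp
    qed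
  qed (use disj g extremal in simp_all)
  then show ?thesis
    by simp
qed

lemma extremal_contact:
  assumes "length P = n" and "set C \<inter> set P \<noteq> {}"
  obtains (forward) a where "a < n" "P ! a \<in> set C"
      "\<And>j. j < n \<Longrightarrow> P ! j \<in> set C \<Longrightarrow> a \<le> j \<and> j + a < n"
    | (backward) a where "a < n" "rev P ! a \<in> set C"
      "\<And>j. j < n \<Longrightarrow> rev P ! j \<in> set C \<Longrightarrow> a \<le> j \<and> j + a < n"
proof -
  define S where "S = {j. j < n \<and> P ! j \<in> set C}"
  obtain x where "x \<in> set C" and "x \<in> set P"
    using assms(2) by blast
  then obtain i where "i < n" and "P ! i \<in> set C"
    using assms(1) by (metis in_set_conv_nth)
  then have "finite S" and "S \<noteq> {}"
    by (auto simp: S_def)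
  then have S: "Min S \<in> S" "Max S \<in> S" "\<And>j. j \<in> S \<Longrightarrow> Min S \<le> j \<and> j \<le> Max S"
    by simp_all
  have rev_P: "rev P ! j = P ! (n - 1 - j)" if "j < n" for j
    using that assms(1) by (simp add: rev_nth)
  show ?thesis
  proof (cases "Min S + Max S < n")
    case True
    show ?thesis
    proof (rule forward[of "Min S"])
      fix j
      assume "j < n" and "P ! j \<in> set C"
      then have "j \<in> S"
        by (simp add: S_def)
      then show "Min S \<le> j \<and> j + Min S < n"
        using S(3) True by fastforce
    qed (use S(1) in \<open>simp_all add: S_def\<close>)
  next
    case False
    show ?thesis
    proof (rule backward[of "n - 1 - Max S"])
      fix j
      assume "j < n" and "rev P ! j \<in> set C"
      then have "n - 1 - j \<in> S"
        using rev_P by (simp add: S_def)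
      then show "n - 1 - Max S \<le> j \<and> j + (n - 1 - Max S) < n"
        using S(3) False \<open>j < n\<close> by fastforce
    qed (use S rev_P in \<open>auto simp: S_def\<close>)
  qed
qed

theorem mainTheorem9:
  fixes k :: nat and C P :: "'a list"
  assumes "3 \<le> k"
    and "is_cycle C (2 * k)"
    and "is_path P (2 * k - 1)"
    and "cycle_edges C \<inter> path_edges P = {}"
    and "set C \<inter> set P \<noteq> {}"
    and "girth_at_least (cycle_edges C \<union> path_edges P) (2 * k - 2)"
  shows "\<exists>Q1 Q2 l1 l2. is_path Q1 l1 \<and> is_path Q2 l2
           \<and> l1 \<in> {2 * k - 1, 2 * k} \<and> l2 \<in> {2 * k - 1, 2 * k}
           \<and> path_edges Q1 \<inter> path_edges Q2 = {}
           \<and> path_edges Q1 \<union> path_edges Q2 = cycle_edges C \<union> path_edges P"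
proof -
  have "length P = 2 * k"
    using assms(1,3) by (simp add: is_path_def)
  from this assms(5) have "two_path_decomposition (cycle_edges C \<union> path_edges P) {2 * k - 1, 2 * k}"
  proof (cases rule: extremal_contact)
    case (forward a)
    then show ?thesis
      using decomposition_from_extremal_contact[OF assms(1,2,3,4,6)] by blast
  next
    case (backward a)
    have "is_path (rev P) (2 * k - 1)"
      using assms(3) by (simp add: is_path_def)
    then show ?thesis
      using decomposition_from_extremal_contact[OF assms(1,2), of "rev P" a] backward assms(4,6)
      by simp
  qed
  then show ?thesis
    unfolding two_path_decomposition_def .
qed

end
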